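(* The set $\mathbb{R}_\mathcal{I}$ of interval numbers, equipped with the addition $\bar a+\bar b=\langle a_c+b_c;\,a_wb_w\rangle$ and the scalar multiplication $k\bar a=\langle ka_c;\,a_w^{k}\rangle$ ($k\in\mathbb{R}$), is a (real) linear space.
   Context: An interval number is a closed interval $\bar a=[a_l,a_r]$ with $a_l,a_r\in\mathbb{R}$ and $a_l<a_r$ (real numbers are not regarded as degenerate intervals). $\mathbb{R}_\mathcal{I}$ denotes the set of all interval numbers. For $\bar a=[a_l,a_r]$ put $a_c=(a_l+a_r)/2$ (center) and $a_w=(a_r-a_l)/2>0$ (radius), and write $\bar a=\langle a_c;a_w\rangle$, i.e. $\langle a_c;a_w\rangle=[a_c-a_w,a_c+a_w]$. *)

theory Defs
  imports "HOL-Analysis.Analysis" "HOL-Algebra.Module"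
begin

text \<open>An interval number [l, r] is represented by the pair of its endpoints (l, r), with l < r.\<close>
type_synonym interval = "real \<times> real"

definition RI :: "interval set" where
  "RI = {(l, r). l < r}"

definition icenter :: "interval \<Rightarrow> real" where
  "icenter a = (fst a + snd a) / 2"

definition iradius :: "interval \<Rightarrow> real" where
  "iradius a = (snd a - fst a) / 2"

definition cw :: "real \<Rightarrow> real \<Rightarrow> interval" where
  "cw c w = (c - w, c + w)"

definition iadd :: "interval \<Rightarrow> interval \<Rightarrow> interval" where
  "iadd a b = cw (icenter a + icenter b) (iradius a * iradius b)"

definition ismult :: "real \<Rightarrow> interval \<Rightarrow> interval" where
  "ismult k a = cw (k * icenter a) (iradius a powr k)"

definition real_field :: "real ring" where
  "real_field = \<lparr>carrier = UNIV, mult = (*), one = 1, zero = 0, add = (+)\<rparr>"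

text \<open>The multiplicative fields of the
  record are irrelevant for the module structure and left unspecified; the zero is
  the neutral element <0;1> = [-1,1].\<close>
definition interval_space :: "(real, interval) module" where
  "interval_space = \<lparr>carrier = RI, mult = (\<lambda>_ _. undefined), one = undefined,
     zero = cw 0 1, add = iadd, smult = ismult\<rparr>"

end

theory Submission
  imports Defs "HOL-Algebra.Algebraic_Closure_Type"
begin

text \<open>The map \<open>a \<mapsto> (a\<^sub>c, ln a\<^sub>w)\<close> is a bijection from \<open>\<real>\<^sub>\<I>\<close> onto \<open>\<real>\<^sup>2\<close> that turns
  the interval operations into the vector operations of \<open>\<real>\<^sup>2\<close>. Accordingly each linear-space
  axiom reduces to a law of exponents for positive radii (\<open>powr_add\<close>, \<open>powr_mult\<close>,
  \<open>powr_powr\<close>); the zero is \<open>\<langle>0;1\<rangle>\<close> and the negative of \<open>\<langle>c;w\<rangle>\<close> is \<open>\<langle>-c;1/w\<rangle>\<close>.\<close>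

lemma real_field_eq_ring_of_type_algebra: "real_field = ring_of_type_algebra"
  by (simp add: real_field_def ring_of_type_algebra_def)

lemma field_real_field: "field real_field"
  by (simp add: real_field_eq_ring_of_type_algebra field_from_type_algebra)

lemma cring_real_field: "cring real_field"
  by (simp add: real_field_eq_ring_of_type_algebra cring_from_type_algebra)

lemma icenter_cw [simp]: "icenter (cw c w) = c"
  and iradius_cw [simp]: "iradius (cw c w) = w"
  by (simp_all add: cw_def icenter_def iradius_def)

lemma interval_eq_iff: "a = b \<longleftrightarrow> icenter a = icenter b \<and> iradius a = iradius b"
  by (cases a, cases b) (auto simp: icenter_def iradius_def field_simps)

lemma mem_RI_iff: "a \<in> RI \<longleftrightarrow> iradius a > 0"
  by (cases a) (auto simp: RI_def iradius_def)

lemma icenter_iadd [simp]: "icenter (iadd a b) = icenter a + icenter b"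
  and iradius_iadd [simp]: "iradius (iadd a b) = iradius a * iradius b"
  by (simp_all add: iadd_def)

lemma icenter_ismult [simp]: "icenter (ismult k a) = k * icenter a"
  and iradius_ismult [simp]: "iradius (ismult k a) = iradius a powr k"
  by (simp_all add: ismult_def)

lemma interval_space_simps [simp]:
  "carrier interval_space = RI"
  "\<zero>\<^bsub>interval_space\<^esub> = cw 0 1"
  "x \<oplus>\<^bsub>interval_space\<^esub> y = iadd x y"
  "k \<odot>\<^bsub>interval_space\<^esub> x = ismult k x"
  by (simp_all add: interval_space_def)

lemma real_field_simps [simp]:
  "carrier real_field = UNIV"
  "\<one>\<^bsub>real_field\<^esub> = 1"
  "a \<oplus>\<^bsub>real_field\<^esub> b = a + b"
  "a \<otimes>\<^bsub>real_field\<^esub> b = a * b"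
  by (simp_all add: real_field_def)

lemma abelian_group_interval_space: "abelian_group interval_space"
proof (rule abelian_groupI)
  fix x assume "x \<in> carrier interval_space"
  then have "iradius x > 0" by (simp add: mem_RI_iff)
  then show "\<exists>y\<in>carrier interval_space. y \<oplus>\<^bsub>interval_space\<^esub> x = \<zero>\<^bsub>interval_space\<^esub>"
    by (intro bexI[of _ "cw (- icenter x) (1 / iradius x)"]) (simp_all add: interval_eq_iff mem_RI_iff)
qed (auto simp: interval_eq_iff mem_RI_iff)

lemma module_interval_space: "module real_field interval_space"
  by (rule moduleI[OF cring_real_field abelian_group_interval_space])
    (auto simp: interval_eq_iff mem_RI_iff powr_add powr_mult powr_powr algebra_simps)

theorem theorem2p41:
  shows "field real_field \<and> module real_field interval_space"
  by (simp add: field_real_field module_interval_space)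

end
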